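(* Let $S_A = A_{II} - A_{IL}A_{LL}^{-1}A_{LI}$ and $S_M = M_{II} - A_{IL}A_{LL}^{-1}A_{LI}$. Then $M^{-1}A$ has (at least) $N_L$ eigenvalues equal to 1, with eigenvectors $\vec{e}^{(k)}$ for $1\leq k \leq N_L$. The other $N_I$ eigenvalues are the eigenvalues of $S_M^{-1}S_A$.
   Context: Let $A$ be an $N\times N$ matrix (in the paper, the upwind finite-difference discretization matrix of $-\varepsilon u'' - c(x)u' + r(x)u = f$ on $(0,1)$ with homogeneous Dirichlet conditions, on a mesh $0=x_0<\dots<x_N=1$). Partition the unknowns into a layer set $L$ (the first $N_L$ indices, meshpoints where meshwidths are $\mathcal{O}(\varepsilon/N)$, including the transition point) and an interior set $I$ (the remaining $N_I$ indices, meshwidths $\mathcal{O}(1/N)$), with $N = N_L + N_I$, so that $A = \begin{bmatrix} A_{LL} & A_{LI} \\ A_{IL} & A_{II}\end{bmatrix}$. Let $M_{II}$ be the upper triangular part (including the diagonal) of $A_{II}$, and define the preconditioner $M = \begin{bmatrix} A_{LL} & A_{LI} \\ A_{IL} & M_{II}\end{bmatrix}$. $\vec{e}^{(k)}$ denotes the $k$-th canonical unit vector of length $N$. The relevant matrices ($A_{LL}$, $S_A$, $S_M$) are assumed invertible. *)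

theory Defs
  imports "Jordan_Normal_Form.Gauss_Jordan_Elimination" "Jordan_Normal_Form.Char_Poly"
begin

text \<open>Inverse of a square matrix over a field (meaningful when the matrix is invertible).\<close>
definition minv :: "'a :: field mat \<Rightarrow> 'a mat" where
  "minv A = the (mat_inverse A)"

text \<open>Blocks of an (NL+NI) x (NL+NI) matrix w.r.t. the partition L = first NL indices,
  I = remaining indices.\<close>
definition blk_LL :: "'a mat \<Rightarrow> nat \<Rightarrow> 'a mat" where
  "blk_LL A NL = (case split_block A NL NL of (B,_,_,_) \<Rightarrow> B)"
definition blk_LI :: "'a mat \<Rightarrow> nat \<Rightarrow> 'a mat" where
  "blk_LI A NL = (case split_block A NL NL of (_,B,_,_) \<Rightarrow> B)"
definition blk_IL :: "'a mat \<Rightarrow> nat \<Rightarrow> 'a mat" where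
  "blk_IL A NL = (case split_block A NL NL of (_,_,B,_) \<Rightarrow> B)"
definition blk_II :: "'a mat \<Rightarrow> nat \<Rightarrow> 'a mat" where
  "blk_II A NL = (case split_block A NL NL of (_,_,_,B) \<Rightarrow> B)"

definition upper_part :: "'a :: zero mat \<Rightarrow> 'a mat" where
  "upper_part B = mat (dim_row B) (dim_col B) (\<lambda>(i,j). if i \<le> j then B $$ (i,j) else 0)"

definition precond :: "'a :: zero mat \<Rightarrow> nat \<Rightarrow> 'a mat" where
  "precond A NL = four_block_mat (blk_LL A NL) (blk_LI A NL) (blk_IL A NL) (upper_part (blk_II A NL))"

definition schur_A :: "'a :: field mat \<Rightarrow> nat \<Rightarrow> 'a mat" where
  "schur_A A NL = blk_II A NL - blk_IL A NL * minv (blk_LL A NL) * blk_LI A NL"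
definition schur_M :: "'a :: field mat \<Rightarrow> nat \<Rightarrow> 'a mat" where
  "schur_M A NL = upper_part (blk_II A NL) - blk_IL A NL * minv (blk_LL A NL) * blk_LI A NL"

end

theory Submission
  imports Defs
begin

(* M and A share the blocks A_LL, A_LI, A_IL, so block elimination factors A = M B with
   B = [I, X; 0, S_M^-1 S_A] and X = A_LL^-1 A_LI (I - S_M^-1 S_A). Moreover
   det M = det A_LL * det S_M, so M is invertible and M^-1 A = B. This block upper triangular
   matrix fixes the first N_L unit vectors, and its characteristic polynomial is
   (x - 1)^N_L times that of S_M^-1 S_A. *)

lemma invertible_mat_det_nonzero:
  fixes B :: "'a :: comm_ring_1 mat"
  assumes "invertible_mat B" and B: "B \<in> carrier_mat n n"
  shows "det B \<noteq> 0"
proof -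
  from assms obtain C where BC: "B * C = 1\<^sub>m n" and CB: "C * B = 1\<^sub>m (dim_row C)"
    unfolding invertible_mat_def inverts_mat_def by auto
  have C: "C \<in> carrier_mat n n"
    using BC CB B by (metis carrier_matD(2) carrier_matI index_mult_mat(3) index_one_mat(3))
  have "det B * det C = 1" using det_mult[OF B C] BC by simp
  then show ?thesis by auto
qed

lemma minv_mat:
  fixes B :: "'a :: field mat"
  assumes B: "B \<in> carrier_mat n n" and "det B \<noteq> 0"
  shows "minv B \<in> carrier_mat n n" "B * minv B = 1\<^sub>m n" "minv B * B = 1\<^sub>m n"
proof -
  have "B \<in> Units (ring_mat TYPE('a) n ())" by (rule det_non_zero_imp_unit[OF assms])
  then obtain C where "mat_inverse B = Some C" using mat_inverse(1)[OF B] by fastforce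
  then show "minv B \<in> carrier_mat n n" "B * minv B = 1\<^sub>m n" "minv B * B = 1\<^sub>m n"
    using mat_inverse(2)[OF B] unfolding minv_def by auto
qed

lemma minv_mult_cancel_left:
  fixes M :: "'a :: field mat"
  assumes M: "M \<in> carrier_mat n n" and "det M \<noteq> 0" and B: "B \<in> carrier_mat n k"
  shows "minv M * (M * B) = B"
  using minv_mat[OF assms(1,2)] M B by (simp flip: assoc_mult_mat[of _ n n _ n _ k])

lemma mult_minv_cancel_left:
  fixes M :: "'a :: field mat"
  assumes M: "M \<in> carrier_mat n n" and "det M \<noteq> 0" and B: "B \<in> carrier_mat n k"
  shows "M * (minv M * B) = B"
  using minv_mat[OF assms(1,2)] M B by (simp flip: assoc_mult_mat[of _ n n _ n _ k])

lemma blk_split: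
  assumes "A \<in> carrier_mat (n + m) (n + m)"
  shows "blk_LL A n \<in> carrier_mat n n" "blk_LI A n \<in> carrier_mat n m"
    "blk_IL A n \<in> carrier_mat m n" "blk_II A n \<in> carrier_mat m m"
    "A = four_block_mat (blk_LL A n) (blk_LI A n) (blk_IL A n) (blk_II A n)"
proof -
  obtain A1 A2 A3 A4 where sb: "split_block A n n = (A1, A2, A3, A4)" by (metis prod_cases4)
  have "blk_LL A n = A1" "blk_LI A n = A2" "blk_IL A n = A3" "blk_II A n = A4"
    unfolding blk_LL_def blk_LI_def blk_IL_def blk_II_def sb by simp_all
  then show "blk_LL A n \<in> carrier_mat n n" "blk_LI A n \<in> carrier_mat n m"
    "blk_IL A n \<in> carrier_mat m n" "blk_II A n \<in> carrier_mat m m"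
    "A = four_block_mat (blk_LL A n) (blk_LI A n) (blk_IL A n) (blk_II A n)"
    using split_block[OF sb] assms by auto
qed

lemma upper_part_carrier_mat [simp]: "B \<in> carrier_mat n m \<Longrightarrow> upper_part B \<in> carrier_mat n m"
  unfolding upper_part_def by auto

lemma char_poly_one_mat: "char_poly (1\<^sub>m n :: 'a :: comm_ring_1 mat) = [:-1, 1:] ^ n"
  by (subst char_poly_upper_triangular[of _ n]) auto

lemma char_poly_four_block_mat_lower_left_zero:
  fixes A :: "'a :: idom mat"
  assumes A: "A \<in> carrier_mat n n" and B: "B \<in> carrier_mat n m" and D: "D \<in> carrier_mat m m"
  shows "char_poly (four_block_mat A B (0\<^sub>m m n) D) = char_poly A * char_poly D"
proof -
  have "char_poly_matrix (four_block_mat A B (0\<^sub>m m n) D)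
      = four_block_mat (char_poly_matrix A) (map_mat (\<lambda>a. [:-a:]) B) (0\<^sub>m m n) (char_poly_matrix D)"
    using A B D by (intro eq_matI) (auto simp: char_poly_matrix_def)
  then show ?thesis
    unfolding char_poly_def using A B D by (simp add: det_four_block_mat_lower_left_zero[of _ n _ m])
qed

lemma eigenvector_unit_vec_four_block_mat_one:
  fixes X :: "'a :: comm_ring_1 mat"
  assumes X: "X \<in> carrier_mat n m" and Y: "Y \<in> carrier_mat m m" and "k < n"
  shows "eigenvector (four_block_mat (1\<^sub>m n) X (0\<^sub>m m n) Y) (unit_vec (n + m) k) 1"
proof -
  define B where "B = four_block_mat (1\<^sub>m n) X (0\<^sub>m m n) Y"
  have B: "B \<in> carrier_mat (n + m) (n + m)" unfolding B_def using X Y by auto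
  have k: "k < n + m" using \<open>k < n\<close> by simp
  have "B *\<^sub>v unit_vec (n + m) k = unit_vec (n + m) k"
  proof (rule eq_vecI)
    fix i assume "i < dim_vec (unit_vec (n + m) k)"
    then have i: "i < n + m" by simp
    have "(B *\<^sub>v unit_vec (n + m) k) $ i = B $$ (i, k)"
      using B i k by simp
    also have "\<dots> = unit_vec (n + m) k $ i"
      unfolding B_def using X Y i \<open>k < n\<close> by auto
    finally show "(B *\<^sub>v unit_vec (n + m) k) $ i = unit_vec (n + m) k $ i" .
  qed (use B in simp)
  then show ?thesis
    unfolding eigenvector_def B_def[symmetric] using B k by simp
qed

definition schur_complement :: "'a :: field mat \<Rightarrow> 'a mat \<Rightarrow> 'a mat \<Rightarrow> 'a mat \<Rightarrow> 'a mat" where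
  "schur_complement A1 A2 A3 A4 = A4 - A3 * minv A1 * A2"

lemma schur_complement_carrier_mat [simp]:
  "A2 \<in> carrier_mat n m \<Longrightarrow> A3 \<in> carrier_mat m n \<Longrightarrow> A4 \<in> carrier_mat m m \<Longrightarrow>
    schur_complement A1 A2 A3 A4 \<in> carrier_mat m m"
  unfolding schur_complement_def by auto

lemma det_four_block_mat_schur_complement:
  fixes A1 :: "'a :: field mat"
  assumes A1: "A1 \<in> carrier_mat n n" and A2: "A2 \<in> carrier_mat n m"
    and A3: "A3 \<in> carrier_mat m n" and A4: "A4 \<in> carrier_mat m m" and "det A1 \<noteq> 0"
  shows "det (four_block_mat A1 A2 A3 A4) = det A1 * det (schur_complement A1 A2 A3 A4)"
proof -
  note A1_inv = minv_mat[OF A1 \<open>det A1 \<noteq> 0\<close>]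
  define S where "S = schur_complement A1 A2 A3 A4"
  have S: "S \<in> carrier_mat m m" unfolding S_def using A2 A3 A4 by simp
  have "four_block_mat (1\<^sub>m n) (0\<^sub>m n m) (A3 * minv A1) (1\<^sub>m m) * four_block_mat A1 A2 (0\<^sub>m m n) S
      = four_block_mat (1\<^sub>m n * A1 + 0\<^sub>m n m * 0\<^sub>m m n) (1\<^sub>m n * A2 + 0\<^sub>m n m * S)
          (A3 * minv A1 * A1 + 1\<^sub>m m * 0\<^sub>m m n) (A3 * minv A1 * A2 + 1\<^sub>m m * S)"
    using A1 A2 A3 S A1_inv by (intro mult_four_block_mat) auto
  also have "\<dots> = four_block_mat A1 A2 A3 A4"
  proof (rule cong_four_block_mat)
    show "A3 * minv A1 * A1 + 1\<^sub>m m * 0\<^sub>m m n = A3"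
      using A1 A3 A1_inv by (simp add: assoc_mult_mat[of _ m n _ n _ n])
    show "A3 * minv A1 * A2 + 1\<^sub>m m * S = A4"
      using A1 A2 A3 A4 A1_inv unfolding S_def schur_complement_def by (intro eq_matI) auto
  qed (use A1 A2 S in simp_all)
  finally have "four_block_mat A1 A2 A3 A4
      = four_block_mat (1\<^sub>m n) (0\<^sub>m n m) (A3 * minv A1) (1\<^sub>m m) * four_block_mat A1 A2 (0\<^sub>m m n) S" ..
  then show ?thesis
    using A1 A2 A3 S A1_inv unfolding S_def[symmetric]
    by (simp add: det_mult[of _ "n + m"] det_four_block_mat_upper_right_zero[of _ n _ m]
        det_four_block_mat_lower_left_zero[of _ n _ m])
qed

lemma mult_four_block_mat_unitriangular:
  fixes A1 :: "'a :: semiring_1 mat"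
  assumes "A1 \<in> carrier_mat n n" and "A2 \<in> carrier_mat n m"
    and "A3 \<in> carrier_mat m n" and "A4 \<in> carrier_mat m m"
    and "X \<in> carrier_mat n m" and "Y \<in> carrier_mat m m"
  shows "four_block_mat A1 A2 A3 A4 * four_block_mat (1\<^sub>m n) X (0\<^sub>m m n) Y
    = four_block_mat A1 (A1 * X + A2 * Y) A3 (A3 * X + A4 * Y)"
  using assms by (subst mult_four_block_mat[OF assms(1-4) one_carrier_mat assms(5) zero_carrier_mat assms(6)])
    auto

lemma four_block_mat_factor_unitriangular:
  fixes A1 :: "'a :: field mat"
  assumes A1: "A1 \<in> carrier_mat n n" and A2: "A2 \<in> carrier_mat n m"
    and A3: "A3 \<in> carrier_mat m n" and A4: "A4 \<in> carrier_mat m m" and U: "U \<in> carrier_mat m m"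
    and "det A1 \<noteq> 0" and "det (schur_complement A1 A2 A3 U) \<noteq> 0"
  obtains X where "X \<in> carrier_mat n m"
    and "four_block_mat A1 A2 A3 A4 = four_block_mat A1 A2 A3 U * four_block_mat (1\<^sub>m n) X (0\<^sub>m m n)
      (minv (schur_complement A1 A2 A3 U) * schur_complement A1 A2 A3 A4)"
proof -
  define Y where "Y = minv (schur_complement A1 A2 A3 U) * schur_complement A1 A2 A3 A4"
  define X where "X = minv A1 * (A2 - A2 * Y)"
  note A1_inv = minv_mat[OF A1 \<open>det A1 \<noteq> 0\<close>]
  define C where "C = A3 * minv A1 * A2"
  have C: "C \<in> carrier_mat m m" unfolding C_def using A1_inv A2 A3 by simp
  have SU: "schur_complement A1 A2 A3 U \<in> carrier_mat m m" using A2 A3 U by simp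
  note SU_inv = minv_mat[OF SU \<open>det (schur_complement A1 A2 A3 U) \<noteq> 0\<close>]
  have Y: "Y \<in> carrier_mat m m" unfolding Y_def using SU_inv A2 A3 A4 by simp
  have X: "X \<in> carrier_mat n m" unfolding X_def using A1_inv A2 Y by auto
  have A1X: "A1 * X = A2 - A2 * Y"
    unfolding X_def using A2 Y by (intro mult_minv_cancel_left[OF A1 \<open>det A1 \<noteq> 0\<close>]) auto
  have A3X: "A3 * X = C - C * Y"
  proof -
    have "A3 * X = A3 * minv A1 * (A2 - A2 * Y)"
      unfolding X_def using A1_inv A2 A3 Y by (subst assoc_mult_mat[of _ m n _ n _ m]) auto
    then show ?thesis
      unfolding C_def using A1_inv A2 A3 Y
      by (simp add: mult_minus_distrib_mat[of _ m n _ m] assoc_mult_mat[of _ m n _ n _ m]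
          assoc_mult_mat[of _ m n _ m _ m] assoc_mult_mat[of _ n n _ m _ m])
  qed
  have "schur_complement A1 A2 A3 U * Y = schur_complement A1 A2 A3 A4"
    unfolding Y_def using A2 A3 A4
    by (intro mult_minv_cancel_left[OF SU \<open>det (schur_complement A1 A2 A3 U) \<noteq> 0\<close>, of _ m]) simp
  then have SU_Y: "(U - C) * Y = A4 - C" unfolding schur_complement_def C_def .
  have "four_block_mat A1 A2 A3 U * four_block_mat (1\<^sub>m n) X (0\<^sub>m m n) Y
      = four_block_mat A1 (A1 * X + A2 * Y) A3 (A3 * X + U * Y)"
    using A1 A2 A3 U X Y by (rule mult_four_block_mat_unitriangular)
  also have "\<dots> = four_block_mat A1 A2 A3 A4"
  proof (rule cong_four_block_mat)
    show "A1 * X + A2 * Y = A2"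
      unfolding A1X using A2 Y by (intro eq_matI) auto
    have UY: "U * Y - C * Y = A4 - C"
      using SU_Y U C Y by (simp add: minus_mult_distrib_mat[of _ m m])
    show "A3 * X + U * Y = A4"
      unfolding A3X
    proof (rule eq_matI)
      fix i j assume "i < dim_row A4" "j < dim_col A4"
      moreover have "(U * Y - C * Y) $$ (i, j) = (A4 - C) $$ (i, j)" using UY by simp
      ultimately show "(C - C * Y + U * Y) $$ (i, j) = A4 $$ (i, j)"
        using A4 C U Y by (auto simp: algebra_simps)
    qed (use A4 C U Y in auto)
  qed simp_all
  finally show ?thesis
    using that[OF X] unfolding Y_def by simp
qed

lemma minv_four_block_mat_mult_four_block_mat:
  fixes A1 :: "'a :: field mat"
  assumes A1: "A1 \<in> carrier_mat n n" and A2: "A2 \<in> carrier_mat n m"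
    and A3: "A3 \<in> carrier_mat m n" and A4: "A4 \<in> carrier_mat m m" and U: "U \<in> carrier_mat m m"
    and "det A1 \<noteq> 0" and "det (schur_complement A1 A2 A3 U) \<noteq> 0"
  obtains X where "X \<in> carrier_mat n m"
    and "minv (four_block_mat A1 A2 A3 U) * four_block_mat A1 A2 A3 A4 = four_block_mat (1\<^sub>m n) X (0\<^sub>m m n)
      (minv (schur_complement A1 A2 A3 U) * schur_complement A1 A2 A3 A4)"
proof -
  let ?Y = "minv (schur_complement A1 A2 A3 U) * schur_complement A1 A2 A3 A4"
  obtain X where X: "X \<in> carrier_mat n m"
    and factor: "four_block_mat A1 A2 A3 A4 = four_block_mat A1 A2 A3 U * four_block_mat (1\<^sub>m n) X (0\<^sub>m m n) ?Y"
    using four_block_mat_factor_unitriangular[OF assms] .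
  have M: "four_block_mat A1 A2 A3 U \<in> carrier_mat (n + m) (n + m)" using A1 U by simp
  have "det (four_block_mat A1 A2 A3 U) \<noteq> 0"
    using det_four_block_mat_schur_complement[OF A1 A2 A3 U] assms(6,7) by simp
  moreover have "?Y \<in> carrier_mat m m"
    using minv_mat(1)[OF _ assms(7), of m] A2 A3 A4 U by simp
  ultimately have "minv (four_block_mat A1 A2 A3 U) * four_block_mat A1 A2 A3 A4
      = four_block_mat (1\<^sub>m n) X (0\<^sub>m m n) ?Y"
    unfolding factor using X by (intro minv_mult_cancel_left[OF M, of _ "n + m"]) auto
  then show thesis by (rule that[OF X])
qed

theorem theorem2p1:
  fixes A :: "real mat" and NL NI N :: nat
  assumes "N = NL + NI"
    and "A \<in> carrier_mat N N"
    and "invertible_mat (blk_LL A NL)"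
    and "invertible_mat (schur_A A NL)"
    and "invertible_mat (schur_M A NL)"
  shows "(\<forall>k < NL. eigenvector (minv (precond A NL) * A) (unit_vec N k) 1)
    \<and> char_poly (minv (precond A NL) * A)
        = [:-1, 1:] ^ NL * char_poly (minv (schur_M A NL) * schur_A A NL)"
proof -
  let ?A1 = "blk_LL A NL" and ?A2 = "blk_LI A NL" and ?A3 = "blk_IL A NL" and ?A4 = "blk_II A NL"
  have "A \<in> carrier_mat (NL + NI) (NL + NI)" using assms(1,2) by simp
  note blocks = blk_split[OF this]
  have S_M: "schur_M A NL = schur_complement ?A1 ?A2 ?A3 (upper_part ?A4)"
    and S_A: "schur_A A NL = schur_complement ?A1 ?A2 ?A3 ?A4"
    unfolding schur_M_def schur_A_def schur_complement_def by simp_all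
  have "det ?A1 \<noteq> 0" using invertible_mat_det_nonzero[OF assms(3) blocks(1)] .
  moreover have "det (schur_M A NL) \<noteq> 0"
    using invertible_mat_det_nonzero[OF assms(5), of NI] blocks(2-4) unfolding S_M by simp
  ultimately obtain X where X: "X \<in> carrier_mat NL NI"
    and precond_A: "minv (precond A NL) * A
      = four_block_mat (1\<^sub>m NL) X (0\<^sub>m NI NL) (minv (schur_M A NL) * schur_A A NL)"
    using minv_four_block_mat_mult_four_block_mat[OF blocks(1-4) upper_part_carrier_mat[OF blocks(4)]]
    unfolding precond_def S_M S_A blocks(5)[symmetric] by metis
  have "minv (schur_M A NL) * schur_A A NL \<in> carrier_mat NI NI"
    using minv_mat(1)[OF _ \<open>det (schur_M A NL) \<noteq> 0\<close>, of NI] blocks(2-4) unfolding S_M S_A by simp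
  then show ?thesis
    unfolding precond_A assms(1)
    using eigenvector_unit_vec_four_block_mat_one[OF X] X
    by (simp add: char_poly_four_block_mat_lower_left_zero char_poly_one_mat)
qed

end
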